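(* In the standing setup below, assume that the restriction of $h$ to $\Omega$ is one-to-one and $0\notin h(\Omega)$. Assume also $M=1$, so that for each $\gamma\in\Omega$ one has $\mathcal X_\gamma=\{a x_\gamma: a\in\mathbb C\}$ with $x_\gamma:=x_\gamma^1$ satisfying $\mathcal T(g)x_\gamma=\gamma(g)x_\gamma$ for all $g\in\mathbb G$, and assume $Ax_\gamma\neq0$ for every $\gamma\in\Omega$. Then $R_{\min}=h(F)$. Moreover, $F=\{\gamma\in\Omega: h(\gamma)\in R_{\min}\}$ can be recovered from the measurements $y_0,y_1,\dots,y_{2\kappa-1}$.
   Context: Standing setup. Let $\mathbb G$ be a locally compact abelian group (written additively) with Haar measure $dg$ and Pontryagin dual $\widehat{\mathbb G}$ (the group of continuous unitary characters $\gamma:\mathbb G\to\mathbb T$). A weight is a measurable, locally bounded, even function $w:\mathbb G\to[1,\infty)$ with $w(g_1+g_2)\le w(g_1)w(g_2)$ for all $g_1,g_2$; it is assumed to satisfy the Beurling–Domar condition $\sum_{n=0}^\infty \frac{\ln w(ng)}{1+n^2}<\infty$ for all $g\in\mathbb G$, where $ng=g+\dots+g$ ($n$ times). $L_w(\mathbb G)$ is the Banach algebra of functions $f$ with $\|f\|_w=\int_{\mathbb G}|f(g)|w(g)\,dg<\infty$, with convolution as multiplication, and $\hat f(\gamma)=\int_{\mathbb G}f(g)\gamma(-g)\,dg$. Let $\mathcal X$ be a complex Banach space and $\mathcal T:\mathbb G\to B(\mathcal X)$ a strongly continuous group representation with $\|\mathcal T(g)\|\le w(g)$ for all $g$. $\mathcal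 X$ is an $L_w(\mathbb G)$-module via $fx=\int_{\mathbb G}f(g)\mathcal T(-g)x\,dg$, assumed non-degenerate ($fx=0$ for all $f$ implies $x=0$). The Beurling spectrum of $N\subseteq\mathcal X$ is $\Lambda(N)=\{\gamma\in\widehat{\mathbb G}:$ for every $f\in L_w(\mathbb G)$ with $\hat f(\gamma)\ne0$ there is $x\in N$ with $fx\neq0\}$; $\Lambda(x):=\Lambda(\{x\})$. For closed $F\subseteq\widehat{\mathbb G}$, $\mathcal X(F)=\{x\in\mathcal X:\Lambda(x)\subseteq F\}$ and $\mathcal X_\gamma:=\mathcal X(\{\gamma\})$. Fixed data: a set $\Omega\subseteq\widehat{\mathbb G}$ and integers $M,\kappa\ge1$ such that for every $\gamma\in\Omega$, $\mathcal X_\gamma$ has finite dimension $m_\gamma\le M$, with a basis $x_\gamma^1,\dots,x_\gamma^{m_\gamma}$. $F\subseteq\Omega$ is a finite set of cardinality $\kappa$ and $x=\sum_{\gamma\in F}\sum_{m=1}^{m_\gamma}c_{\gamma m}x_\gamma^m$ with $c_{\gamma m}\in\mathbb C$, where for each $\gamma\in F$ some $c_{\gamma m}\ne0$. $A:\mathcal X\to\mathbb C^S$ ($S\in\mathbb N$) is a linear operator and $B=\sum_{n=1}^N b_n\mathcal T(g_n)$ with $g_n\in\mathbb G$, $b_n\in\mathbb C\setminus\{0\}$; set $h(\gamma)=\sum_{n=1}^N b_n\gamma(g_n)$ for $\gamma\in\widehat{\mathbb G}$. The measurements are $y_\ell=AB^\ell x$, $\ell=0,1,2,\dots$. The polynomial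 $p_{\min}(z)=\sum_{\ell=0}^{\kappa M}\alpha_\ell z^\ell$ has coefficients satisfying $\alpha_{\kappa M}=1$ and $\sum_{\ell=0}^{\kappa M}\alpha_\ell y_{\ell+k}=0$ for all $k=0,1,2,\dots$; if such coefficients are not unique, one chooses those for which the largest possible number of initial coefficients vanish, $\alpha_0=\alpha_1=\dots=\alpha_j=0$ with $j$ maximal. $R_{\min}$ denotes the set of non-zero roots of $p_{\min}$. *)

theory Defs
  imports "HOL-Analysis.Analysis" "HOL-Computational_Algebra.Polynomial"
begin

definition LCA_Haar :: "'g::{topological_ab_group_add,t2_space} measure \<Rightarrow> bool" where
  "LCA_Haar \<mu> \<longleftrightarrow>
     locally_compact_space (euclidean :: 'g topology) \<and>
     space \<mu> = UNIV \<and> sets \<mu> = sets borel \<and>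
     (\<forall>a A. A \<in> sets borel \<longrightarrow> emeasure \<mu> ((+) a ` A) = emeasure \<mu> A) \<and>
     (\<forall>K. compact K \<longrightarrow> emeasure \<mu> K < \<infinity>) \<and>
     (\<forall>U. open U \<and> U \<noteq> {} \<longrightarrow> emeasure \<mu> U > 0) \<and>
     (\<forall>A \<in> sets borel. emeasure \<mu> A = (INF U \<in> {U. open U \<and> A \<subseteq> U}. emeasure \<mu> U)) \<and>
     (\<forall>U. open U \<longrightarrow> emeasure \<mu> U = (SUP K \<in> {K. compact K \<and> K \<subseteq> U}. emeasure \<mu> K))"

definition nmul :: "nat \<Rightarrow> 'g::ab_group_add \<Rightarrow> 'g" where
  "nmul n g = ((+) g ^^ n) 0"

definition dual_group :: "('g::{topological_ab_group_add} \<Rightarrow> complex) set" where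
  "dual_group = {\<gamma>. continuous_on UNIV \<gamma> \<and> (\<forall>a b. \<gamma> (a + b) = \<gamma> a * \<gamma> b) \<and> (\<forall>a. norm (\<gamma> a) = 1)}"

definition BD_weight :: "'g::{topological_ab_group_add,t2_space} measure \<Rightarrow> ('g \<Rightarrow> real) \<Rightarrow> bool" where
  "BD_weight \<mu> w \<longleftrightarrow>
     w \<in> borel_measurable \<mu> \<and>
     (\<forall>x. \<exists>U. open U \<and> x \<in> U \<and> bounded (w ` U)) \<and>
     (\<forall>g. w (- g) = w g) \<and> (\<forall>g. w g \<ge> 1) \<and>
     (\<forall>g1 g2. w (g1 + g2) \<le> w g1 * w g2) \<and>
     (\<forall>g. summable (\<lambda>n. ln (w (nmul n g)) / (1 + real n ^ 2)))"

section \<open>Complex Banach space (a real Banach space with a compatible complex scalar multiplication)\<close>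

definition complex_structure :: "(complex \<Rightarrow> 'x::banach \<Rightarrow> 'x) \<Rightarrow> bool" where
  "complex_structure sc \<longleftrightarrow>
     (\<forall>a b v. sc a (sc b v) = sc (a * b) v) \<and>
     (\<forall>a b v. sc (a + b) v = sc a v + sc b v) \<and>
     (\<forall>a u v. sc a (u + v) = sc a u + sc a v) \<and>
     (\<forall>r v. sc (complex_of_real r) v = r *\<^sub>R v) \<and>
     (\<forall>a v. norm (sc a v) = norm a * norm v)"

definition clinear_op :: "(complex \<Rightarrow> 'x \<Rightarrow> 'x) \<Rightarrow> (complex \<Rightarrow> 'y \<Rightarrow> 'y) \<Rightarrow> ('x::ab_group_add \<Rightarrow> 'y::ab_group_add) \<Rightarrow> bool" where
  "clinear_op scx scy L \<longleftrightarrow> (\<forall>u v. L (u + v) = L u + L v) \<and> (\<forall>a v. L (scx a v) = scy a (L v))"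

definition rep_ok :: "(complex \<Rightarrow> 'x::banach \<Rightarrow> 'x) \<Rightarrow> ('g::topological_ab_group_add \<Rightarrow> real) \<Rightarrow> ('g \<Rightarrow> 'x \<Rightarrow> 'x) \<Rightarrow> bool" where
  "rep_ok sc w T \<longleftrightarrow>
     (\<forall>g. bounded_linear (T g) \<and> clinear_op sc sc (T g)) \<and>
     T 0 = id \<and> (\<forall>a b. T (a + b) = T a \<circ> T b) \<and>
     (\<forall>v. continuous_on UNIV (\<lambda>g. T g v)) \<and>
     (\<forall>g v. norm (T g v) \<le> w g * norm v)"

definition Lw :: "'g::topological_ab_group_add measure \<Rightarrow> ('g \<Rightarrow> real) \<Rightarrow> ('g \<Rightarrow> complex) set" where
  "Lw \<mu> w = {f. f \<in> borel_measurable \<mu> \<and> integrable \<mu> (\<lambda>g. norm (f g) * w g)}"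

definition fourier :: "'g::topological_ab_group_add measure \<Rightarrow> ('g \<Rightarrow> complex) \<Rightarrow> ('g \<Rightarrow> complex) \<Rightarrow> complex" where
  "fourier \<mu> f \<gamma> = (LINT g|\<mu>. f g * \<gamma> (- g))"

text \<open>f x = integral of f(g) T(-g) x dg, a vector-valued integral (defined weakly, i.e. via
  all continuous real-linear functionals; it agrees with the Bochner integral).\<close>
definition module_act :: "'g::topological_ab_group_add measure \<Rightarrow> (complex \<Rightarrow> 'x::banach \<Rightarrow> 'x)
    \<Rightarrow> ('g \<Rightarrow> 'x \<Rightarrow> 'x) \<Rightarrow> ('g \<Rightarrow> complex) \<Rightarrow> 'x \<Rightarrow> 'x" where
  "module_act \<mu> sc T f v = (THE y. \<forall>\<phi>::'x \<Rightarrow> real. bounded_linear \<phi> \<longrightarrow>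
       (\<lambda>g. \<phi> (sc (f g) (T (- g) v))) \<in> borel_measurable \<mu> \<and>
       integrable \<mu> (\<lambda>g. \<phi> (sc (f g) (T (- g) v))) \<and>
       \<phi> y = (LINT g|\<mu>. \<phi> (sc (f g) (T (- g) v))))"

definition nondegenerate :: "'g::topological_ab_group_add measure \<Rightarrow> ('g \<Rightarrow> real) \<Rightarrow> (complex \<Rightarrow> 'x::banach \<Rightarrow> 'x)
    \<Rightarrow> ('g \<Rightarrow> 'x \<Rightarrow> 'x) \<Rightarrow> bool" where
  "nondegenerate \<mu> w sc T \<longleftrightarrow> (\<forall>v. (\<forall>f \<in> Lw \<mu> w. module_act \<mu> sc T f v = 0) \<longrightarrow> v = 0)"

definition beurling_spectrum :: "'g::topological_ab_group_add measure \<Rightarrow> ('g \<Rightarrow> real) \<Rightarrow> (complex \<Rightarrow> 'x::banach \<Rightarrow> 'x)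
    \<Rightarrow> ('g \<Rightarrow> 'x \<Rightarrow> 'x) \<Rightarrow> 'x set \<Rightarrow> ('g \<Rightarrow> complex) set" where
  "beurling_spectrum \<mu> w sc T N = {\<gamma> \<in> dual_group. \<forall>f \<in> Lw \<mu> w.
      fourier \<mu> f \<gamma> \<noteq> 0 \<longrightarrow> (\<exists>v \<in> N. module_act \<mu> sc T f v \<noteq> 0)}"

definition spectral_subspace :: "'g::topological_ab_group_add measure \<Rightarrow> ('g \<Rightarrow> real) \<Rightarrow> (complex \<Rightarrow> 'x::banach \<Rightarrow> 'x)
    \<Rightarrow> ('g \<Rightarrow> 'x \<Rightarrow> 'x) \<Rightarrow> ('g \<Rightarrow> complex) set \<Rightarrow> 'x set" where
  "spectral_subspace \<mu> w sc T F = {v. beurling_spectrum \<mu> w sc T {v} \<subseteq> F}"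

text \<open>alpha is an admissible choice of p_min for the data y and degree d:
  monic of degree d (coefficient alpha_d = 1), annihilating the sequence y, and among all such
  polynomials with the largest number of vanishing initial coefficients, i.e. with maximal
  multiplicity of the root 0.\<close>
definition annihilates :: "(nat \<Rightarrow> complex ^ 's) \<Rightarrow> nat \<Rightarrow> complex poly \<Rightarrow> bool" where
  "annihilates y d p \<longleftrightarrow> degree p = d \<and> coeff p d = 1 \<and>
     (\<forall>k. (\<Sum>l\<le>d. coeff p l *s y (l + k)) = 0)"

definition is_pmin :: "(nat \<Rightarrow> complex ^ 's) \<Rightarrow> nat \<Rightarrow> complex poly \<Rightarrow> bool" where
  "is_pmin y d p \<longleftrightarrow> annihilates y d p \<and>
     (\<forall>q. annihilates y d q \<longrightarrow> (\<forall>j. (\<forall>i\<le>j. coeff q i = 0) \<longrightarrow> (\<forall>i\<le>j. coeff p i = 0)))"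

definition nonzero_roots :: "complex poly \<Rightarrow> complex set" where
  "nonzero_roots p = {z. z \<noteq> 0 \<and> poly p z = 0}"

end

theory Submission
  imports Defs
begin

text \<open>Since \<open>B\<close> acts on each eigenvector \<open>x\<^sub>\<gamma>\<close> as multiplication by \<open>h \<gamma>\<close>, the measurements
  form a generalized power sum \<open>y l = (\<Sum>\<gamma>\<in>F. h \<gamma> ^ l *s v \<gamma>)\<close> with distinct nodes \<open>h \<gamma>\<close> and
  nonzero coefficients \<open>v \<gamma> = c \<gamma> *s A x\<^sub>\<gamma>\<close>. Combining the shifted samples with the coefficients
  of a polynomial \<open>q\<close> multiplies each \<open>v \<gamma>\<close> by \<open>q(h \<gamma>)\<close>, and a power sum with \<open>n\<close> distinct nodes
  that vanishes for \<open>l < n\<close> has zero coefficients (Vandermonde). Hence \<open>q\<close> annihilates \<open>y\<close> iff it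
  vanishes on \<open>h ` F\<close>, which forces the monic annihilator of degree \<open>\<kappa>\<close> to be the product of
  the \<open>z - h \<gamma>\<close>. Two power sums with at most \<open>\<kappa>\<close> nodes that agree for \<open>l < 2\<kappa>\<close> differ by a
  power sum with at most \<open>2\<kappa>\<close> nodes, so their supports coincide.\<close>

lemma additive_sum:
  fixes L :: "'a::comm_monoid_add \<Rightarrow> 'b::ab_group_add"
  assumes "\<And>u v. L (u + v) = L u + L v"
  shows "L (sum f S) = (\<Sum>i\<in>S. L (f i))"
  using sum_comp_morphism[of L f S] assms[of 0 0] by (simp add: assms comp_def)

definition gen_power_sum :: "('a \<Rightarrow> 'f::field) \<Rightarrow> ('a \<Rightarrow> 'f ^ 'n) \<Rightarrow> 'a set \<Rightarrow> nat \<Rightarrow> 'f ^ 'n" where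
  "gen_power_sum z u S l = (\<Sum>\<gamma>\<in>S. z \<gamma> ^ l *s u \<gamma>)"

definition root_poly :: "('a \<Rightarrow> 'f::field) \<Rightarrow> 'a set \<Rightarrow> 'f poly" where
  "root_poly z S = (\<Prod>\<gamma>\<in>S. [:- z \<gamma>, 1:])"

lemma degree_root_poly: "finite S \<Longrightarrow> degree (root_poly z S) = card S"
  unfolding root_poly_def by (subst degree_prod_eq_sum_degree) auto

lemma lead_coeff_root_poly: "lead_coeff (root_poly z S) = 1"
  unfolding root_poly_def by (simp add: lead_coeff_prod)

lemma poly_root_poly_eq_0_iff: "finite S \<Longrightarrow> poly (root_poly z S) t = 0 \<longleftrightarrow> t \<in> z ` S"
  unfolding root_poly_def by (auto simp: poly_prod)

lemma gen_power_sum_restrict: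
  assumes "finite U" "S \<subseteq> U"
  shows "gen_power_sum z (\<lambda>\<gamma>. if \<gamma> \<in> S then u \<gamma> else 0) U l = gen_power_sum z u S l"
  unfolding gen_power_sum_def using assms
  by (intro sum.mono_neutral_cong_right) auto

lemma gen_power_sum_diff:
  "gen_power_sum z (\<lambda>\<gamma>. u \<gamma> - u' \<gamma>) S l = gen_power_sum z u S l - gen_power_sum z u' S l"
  by (simp add: gen_power_sum_def vector_ssub_ldistrib sum_subtractf)

lemma poly_combination_gen_power_sum:
  "(\<Sum>l\<le>degree q. coeff q l *s gen_power_sum z u S (l + k))
     = gen_power_sum z (\<lambda>\<gamma>. poly q (z \<gamma>) *s u \<gamma>) S k"
proof -
  have "(\<Sum>l\<le>degree q. coeff q l *s gen_power_sum z u S (l + k))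
      = (\<Sum>\<gamma>\<in>S. (\<Sum>l\<le>degree q. coeff q l * z \<gamma> ^ (l + k)) *s u \<gamma>)"
    by (simp add: gen_power_sum_def vec_eq_iff sum_component sum_distrib_left
        sum_distrib_right mult.assoc sum.swap[of _ "{..degree q}"])
  also have "\<dots> = gen_power_sum z (\<lambda>\<gamma>. poly q (z \<gamma>) *s u \<gamma>) S k"
    by (simp add: gen_power_sum_def poly_altdef power_add sum_distrib_left mult_ac
        vector_smult_assoc)
  finally show ?thesis .
qed

text \<open>Vandermonde: apply the annihilator of all nodes except \<open>z(\<gamma>\<^sub>0)\<close>.\<close>
lemma gen_power_sum_eq_0_imp_coeff_eq_0:
  assumes S: "finite S" and inj: "inj_on z S"
    and zero: "\<And>l. l < card S \<Longrightarrow> gen_power_sum z u S l = 0" and \<gamma>0: "\<gamma>0 \<in> S"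
  shows "u \<gamma>0 = 0"
proof -
  define q where "q = root_poly z (S - {\<gamma>0})"
  have "card S > 0" using S \<gamma>0 card_gt_0_iff by blast
  then have "degree q < card S"
    using S \<gamma>0 by (simp add: q_def degree_root_poly card_Diff_singleton)
  then have "(\<Sum>l\<le>degree q. coeff q l *s gen_power_sum z u S (l + 0)) = 0"
    by (intro sum.neutral) (simp add: zero)
  then have "gen_power_sum z (\<lambda>\<gamma>. poly q (z \<gamma>) *s u \<gamma>) S 0 = 0"
    by (simp only: poly_combination_gen_power_sum)
  moreover have "poly q (z \<gamma>) = 0" if "\<gamma> \<in> S - {\<gamma>0}" for \<gamma>
    using that S by (simp add: q_def poly_root_poly_eq_0_iff)
  ultimately have "poly q (z \<gamma>0) *s u \<gamma>0 = 0"
    using S \<gamma>0 by (simp add: gen_power_sum_def sum.remove)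
  moreover have "poly q (z \<gamma>0) \<noteq> 0"
    using S \<gamma>0 inj by (auto simp: q_def poly_root_poly_eq_0_iff inj_on_def)
  ultimately show ?thesis by simp
qed

lemma poly_combination_gen_power_sum_eq_0_iff:
  assumes "finite S" "inj_on z S" and nz: "\<And>\<gamma>. \<gamma> \<in> S \<Longrightarrow> u \<gamma> \<noteq> 0"
  shows "(\<forall>k. (\<Sum>l\<le>degree q. coeff q l *s gen_power_sum z u S (l + k)) = 0)
           \<longleftrightarrow> (\<forall>\<gamma>\<in>S. poly q (z \<gamma>) = 0)"
proof
  assume "\<forall>k. (\<Sum>l\<le>degree q. coeff q l *s gen_power_sum z u S (l + k)) = 0"
  then have "gen_power_sum z (\<lambda>\<gamma>. poly q (z \<gamma>) *s u \<gamma>) S k = 0" for k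
    by (simp add: poly_combination_gen_power_sum)
  then have "poly q (z \<gamma>) *s u \<gamma> = 0" if "\<gamma> \<in> S" for \<gamma>
    using gen_power_sum_eq_0_imp_coeff_eq_0[OF assms(1,2) _ that] by blast
  then show "\<forall>\<gamma>\<in>S. poly q (z \<gamma>) = 0" using nz by simp
qed (simp only: poly_combination_gen_power_sum, simp add: gen_power_sum_def)

lemma annihilates_gen_power_sum_iff:
  fixes z :: "'a \<Rightarrow> complex" and u :: "'a \<Rightarrow> complex ^ 's"
  assumes S: "finite S" and inj: "inj_on z S" and nz: "\<And>\<gamma>. \<gamma> \<in> S \<Longrightarrow> u \<gamma> \<noteq> 0"
  shows "annihilates (gen_power_sum z u S) (card S) p \<longleftrightarrow> p = root_poly z S"
proof -
  have ann: "annihilates (gen_power_sum z u S) (card S) p \<longleftrightarrow>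
      degree p = card S \<and> lead_coeff p = 1 \<and> (\<forall>\<gamma>\<in>S. poly p (z \<gamma>) = 0)" for p
    unfolding annihilates_def
    using poly_combination_gen_power_sum_eq_0_iff[OF S inj nz, where q=p] by auto
  show ?thesis
  proof
    assume p: "annihilates (gen_power_sum z u S) (card S) p"
    show "p = root_poly z S"
    proof (rule ccontr)
      define r where "r = p - root_poly z S"
      assume "p \<noteq> root_poly z S"
      then have r0: "r \<noteq> 0" by (simp add: r_def)
      have "coeff r (card S) = 0" and "degree r \<le> card S"
        using p S degree_diff_le[of p "card S" "root_poly z S"]
        by (auto simp: r_def ann degree_root_poly lead_coeff_root_poly[of z S, symmetric])
      then have "degree r < card S"
        using r0 by (metis le_neq_implies_less leading_coeff_0_iff)
      moreover have "z ` S \<subseteq> {t. poly r t = 0}"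
        using p S by (auto simp: r_def ann poly_root_poly_eq_0_iff)
      then have "card (z ` S) \<le> card {t. poly r t = 0}"
        by (rule card_mono[OF poly_roots_finite[OF r0]])
      then have "card S \<le> degree r"
        using card_poly_roots_bound[OF r0] card_image[OF inj] by simp
      ultimately show False by simp
    qed
  qed (use S lead_coeff_root_poly[of z S] in \<open>simp add: ann degree_root_poly poly_root_poly_eq_0_iff\<close>)
qed

lemma is_pmin_gen_power_sum_iff:
  fixes z :: "'a \<Rightarrow> complex" and u :: "'a \<Rightarrow> complex ^ 's"
  assumes "finite S" "inj_on z S" "\<And>\<gamma>. \<gamma> \<in> S \<Longrightarrow> u \<gamma> \<noteq> 0"
  shows "is_pmin (gen_power_sum z u S) (card S) p \<longleftrightarrow> p = root_poly z S"
proof -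
  have ann: "annihilates (gen_power_sum z u S) (card S) q \<longleftrightarrow> q = root_poly z S" for q
    by (rule annihilates_gen_power_sum_iff) (use assms in auto)
  show ?thesis unfolding is_pmin_def ann by auto
qed

lemma gen_power_sum_determines_support:
  assumes D: "inj_on z D" and S: "finite S" "S \<subseteq> D" and S': "finite S'" "S' \<subseteq> D"
    and card: "card S \<le> n" "card S' \<le> n"
    and nz: "\<And>\<gamma>. \<gamma> \<in> S \<Longrightarrow> u \<gamma> \<noteq> 0" and nz': "\<And>\<gamma>. \<gamma> \<in> S' \<Longrightarrow> u' \<gamma> \<noteq> 0"
    and eq: "\<And>l. l < 2 * n \<Longrightarrow> gen_power_sum z u S l = gen_power_sum z u' S' l"
  shows "S = S'"
proof -
  define U where "U = S \<union> S'"
  define d where "d = (\<lambda>\<gamma>. (if \<gamma> \<in> S then u \<gamma> else 0) - (if \<gamma> \<in> S' then u' \<gamma> else 0))"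
  have U: "finite U" "inj_on z U" using S S' D by (auto simp: U_def intro: inj_on_subset)
  have "card U \<le> 2 * n" using card_Un_le[of S S'] card by (simp add: U_def)
  then have "gen_power_sum z d U l = 0" if "l < card U" for l
    using that U eq by (simp add: d_def gen_power_sum_diff gen_power_sum_restrict U_def)
  then have d0: "d \<gamma> = 0" if "\<gamma> \<in> U" for \<gamma>
    using gen_power_sum_eq_0_imp_coeff_eq_0[OF U] that by blast
  have "\<gamma> \<in> S'" if "\<gamma> \<in> S" for \<gamma>
    using d0[of \<gamma>] nz[OF that] that by (auto simp: d_def U_def split: if_splits)
  moreover have "\<gamma> \<in> S" if "\<gamma> \<in> S'" for \<gamma>
    using d0[of \<gamma>] nz'[OF that] that by (auto simp: d_def U_def split: if_splits)
  ultimately show ?thesis by blast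
qed

lemma B_pow_eigen_sum:
  assumes cstruct: "complex_structure sc" and rep: "rep_ok sc w T"
    and eigen: "\<And>\<gamma> g. \<gamma> \<in> S \<Longrightarrow> T g (xv \<gamma>) = sc (\<gamma> g) (xv \<gamma>)"
    and B_def: "B = (\<lambda>v. \<Sum>n=1..N. sc (b n) (T (gs n) v))"
    and h_def: "h = (\<lambda>\<gamma>. \<Sum>n=1..N. b n * \<gamma> (gs n))"
  shows "(B ^^ l) (\<Sum>\<gamma>\<in>S. sc (e \<gamma>) (xv \<gamma>)) = (\<Sum>\<gamma>\<in>S. sc (e \<gamma> * h \<gamma> ^ l) (xv \<gamma>))"
proof -
  have sc_mult: "\<And>a b v. sc a (sc b v) = sc (a * b) v"
    and sc_addl: "\<And>a b v. sc (a + b) v = sc a v + sc b v"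
    and sc_addr: "\<And>a u v. sc a (u + v) = sc a u + sc a v"
    using cstruct unfolding complex_structure_def by auto
  have T_add: "\<And>g u v. T g (u + v) = T g u + T g v"
    and T_sc: "\<And>g a v. T g (sc a v) = sc a (T g v)"
    using rep unfolding rep_ok_def clinear_op_def by auto
  have B_step: "B (\<Sum>\<gamma>\<in>S. sc (e \<gamma>) (xv \<gamma>)) = (\<Sum>\<gamma>\<in>S. sc (e \<gamma> * h \<gamma>) (xv \<gamma>))" for e
  proof -
    have "B (\<Sum>\<gamma>\<in>S. sc (e \<gamma>) (xv \<gamma>))
        = (\<Sum>n=1..N. \<Sum>\<gamma>\<in>S. sc (b n * (e \<gamma> * \<gamma> (gs n))) (xv \<gamma>))"
      by (simp add: B_def additive_sum[where L="T _", OF T_add]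
          additive_sum[where L="sc _", OF sc_addr] T_sc eigen sc_mult)
    also have "\<dots> = (\<Sum>\<gamma>\<in>S. sc (e \<gamma> * h \<gamma>) (xv \<gamma>))"
      by (subst sum.swap)
        (simp add: additive_sum[where L="\<lambda>a. sc a _", OF sc_addl, symmetric] h_def
          sum_distrib_left mult_ac)
    finally show ?thesis .
  qed
  show ?thesis by (induction l) (simp_all add: B_step mult_ac)
qed

lemma measurements_eigen_sum:
  assumes "complex_structure sc" "rep_ok sc w T"
    and "\<And>\<gamma> g. \<gamma> \<in> S \<Longrightarrow> T g (xv \<gamma>) = sc (\<gamma> g) (xv \<gamma>)"
    and "B = (\<lambda>v. \<Sum>n=1..N. sc (b n) (T (gs n) v))"
    and "h = (\<lambda>\<gamma>. \<Sum>n=1..N. b n * \<gamma> (gs n))"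
    and A_lin: "clinear_op sc (\<lambda>a v. a *s v) A"
  shows "A ((B ^^ l) (\<Sum>\<gamma>\<in>S. sc (e \<gamma>) (xv \<gamma>))) = gen_power_sum h (\<lambda>\<gamma>. e \<gamma> *s A (xv \<gamma>)) S l"
  using A_lin
  by (simp add: B_pow_eigen_sum[OF assms(1-5)] gen_power_sum_def additive_sum[where L=A]
      clinear_op_def mult_ac)

theorem theorem2p2:
  fixes \<mu> :: "'g::{topological_ab_group_add,t2_space} measure"
    and w :: "'g \<Rightarrow> real"
    and sc :: "complex \<Rightarrow> 'x::banach \<Rightarrow> 'x"
    and T :: "'g \<Rightarrow> 'x \<Rightarrow> 'x"
    and \<Omega> :: "('g \<Rightarrow> complex) set"
    and xv :: "('g \<Rightarrow> complex) \<Rightarrow> 'x"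
    and \<kappa> :: nat
    and F :: "('g \<Rightarrow> complex) set"
    and c :: "('g \<Rightarrow> complex) \<Rightarrow> complex"
    and A :: "'x \<Rightarrow> complex ^ 's"
    and N :: nat and gs :: "nat \<Rightarrow> 'g" and b :: "nat \<Rightarrow> complex"
    and B :: "'x \<Rightarrow> 'x" and h :: "('g \<Rightarrow> complex) \<Rightarrow> complex"
    and x :: 'x and y :: "nat \<Rightarrow> complex ^ 's"
  assumes haar: "LCA_Haar \<mu>"
    and weight: "BD_weight \<mu> w"
    and cstruct: "complex_structure sc"
    and rep: "rep_ok sc w T"
    and nondeg: "nondegenerate \<mu> w sc T"
    and Omega_dual: "\<Omega> \<subseteq> dual_group"
    and M1: "\<And>\<gamma>. \<gamma> \<in> \<Omega> \<Longrightarrow> spectral_subspace \<mu> w sc T {\<gamma>} = {sc a (xv \<gamma>) | a. True}"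
    and eigen: "\<And>\<gamma> g. \<gamma> \<in> \<Omega> \<Longrightarrow> T g (xv \<gamma>) = sc (\<gamma> g) (xv \<gamma>)"
    and kappa: "\<kappa> \<ge> 1"
    and F_sub: "F \<subseteq> \<Omega>" and F_fin: "finite F" and F_card: "card F = \<kappa>"
    and c_nz: "\<And>\<gamma>. \<gamma> \<in> F \<Longrightarrow> c \<gamma> \<noteq> 0"
    and x_def: "x = (\<Sum>\<gamma>\<in>F. sc (c \<gamma>) (xv \<gamma>))"
    and A_lin: "clinear_op sc (\<lambda>a v. a *s v) A"
    and b_nz: "\<And>n. n \<in> {1..N} \<Longrightarrow> b n \<noteq> 0"
    and B_def: "B = (\<lambda>v. \<Sum>n=1..N. sc (b n) (T (gs n) v))"
    and h_def: "h = (\<lambda>\<gamma>. \<Sum>n=1..N. b n * \<gamma> (gs n))"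
    and y_def: "y = (\<lambda>l. A ((B ^^ l) x))"
    and h_inj: "inj_on h \<Omega>"
    and h_nz: "0 \<notin> h ` \<Omega>"
    and A_nz: "\<And>\<gamma>. \<gamma> \<in> \<Omega> \<Longrightarrow> A (xv \<gamma>) \<noteq> 0"
  shows "(\<exists>p. is_pmin y \<kappa> p) \<and>
         (\<forall>p. is_pmin y \<kappa> p \<longrightarrow> nonzero_roots p = h ` F \<and> F = {\<gamma> \<in> \<Omega>. h \<gamma> \<in> nonzero_roots p}) \<and>
         (\<forall>F' c'. F' \<subseteq> \<Omega> \<and> finite F' \<and> card F' = \<kappa> \<and> (\<forall>\<gamma>\<in>F'. c' \<gamma> \<noteq> 0) \<and>
             (\<forall>l < 2 * \<kappa>. A ((B ^^ l) (\<Sum>\<gamma>\<in>F'. sc (c' \<gamma>) (xv \<gamma>))) = y l)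
           \<longrightarrow> F' = F)"
proof -
  have samples: "A ((B ^^ l) (\<Sum>\<gamma>\<in>S. sc (e \<gamma>) (xv \<gamma>)))
      = gen_power_sum h (\<lambda>\<gamma>. e \<gamma> *s A (xv \<gamma>)) S l" if "S \<subseteq> \<Omega>" for S e l
    using that by (intro measurements_eigen_sum[OF cstruct rep _ B_def h_def A_lin]) (auto intro: eigen)
  define v where "v = (\<lambda>\<gamma>. c \<gamma> *s A (xv \<gamma>))"
  have v_nz: "\<And>\<gamma>. \<gamma> \<in> F \<Longrightarrow> v \<gamma> \<noteq> 0" using c_nz A_nz F_sub by (auto simp: v_def)
  have y_eq: "y = gen_power_sum h v F"
    using samples[OF F_sub] by (simp add: y_def x_def v_def)
  have pmin: "is_pmin y \<kappa> p \<longleftrightarrow> p = root_poly h F" for p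
    using is_pmin_gen_power_sum_iff[OF F_fin inj_on_subset[OF h_inj F_sub] v_nz]
    by (simp add: y_eq F_card)
  have roots: "nonzero_roots (root_poly h F) = h ` F"
    using h_nz F_sub F_fin by (auto simp: nonzero_roots_def poly_root_poly_eq_0_iff)
  have recover: "F = {\<gamma> \<in> \<Omega>. h \<gamma> \<in> h ` F}"
    using F_sub h_inj by (auto simp: inj_on_def)
  have unique: "F' = F" if F': "F' \<subseteq> \<Omega>" "finite F'" "card F' = \<kappa>" "\<forall>\<gamma>\<in>F'. c' \<gamma> \<noteq> 0"
    and agree: "\<forall>l < 2 * \<kappa>. A ((B ^^ l) (\<Sum>\<gamma>\<in>F'. sc (c' \<gamma>) (xv \<gamma>))) = y l" for F' c'
    using F' F_card A_nz v_nz agree samples[OF F'(1)]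
    by (intro gen_power_sum_determines_support[OF h_inj F'(2,1) F_fin F_sub,
          where n=\<kappa> and u="\<lambda>\<gamma>. c' \<gamma> *s A (xv \<gamma>)" and u'=v]) (auto simp: y_eq)
  show ?thesis
  proof (intro conjI allI impI)
    fix p assume "is_pmin y \<kappa> p"
    then show roots_p: "nonzero_roots p = h ` F" using pmin roots by simp
    show "F = {\<gamma> \<in> \<Omega>. h \<gamma> \<in> nonzero_roots p}"
      unfolding roots_p by (rule recover)
  qed (use pmin unique in blast)+
qed

end
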